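(* For any $p\ge 1$, $$\lim_{x\to\infty}\frac{-\ln\big(\nu_p([x,\infty))\big)}{\Lambda_{\nu_p}^{\ast}(x)}=1.$$
   Context: For $p\ge1$, $\nu_p$ is the probability measure on $\mathbb{R}$ with density $(2\gamma_p)^{-1}\exp(-|x|^p)$, where $\gamma_p=\Gamma(1+1/p)$. $\Lambda_{\nu_p}(t)=\ln\int_{\mathbb{R}}e^{tx}\,d\nu_p(x)$ and $\Lambda_{\nu_p}^{\ast}(x)=\sup_{t\in\mathbb{R}}\{tx-\Lambda_{\nu_p}(t)\}$. *)

theory Defs
  imports "HOL-Probability.Probability"
begin

definition gamma_p :: "real \<Rightarrow> real" where
  "gamma_p p = Gamma (1 + 1 / p)"

definition nu :: "real \<Rightarrow> real measure" where
  "nu p = density lborel (\<lambda>x. ennreal (exp (- (\<bar>x\<bar> powr p)) / (2 * gamma_p p)))"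

definition Lambda :: "real \<Rightarrow> real \<Rightarrow> ereal" where
  "Lambda p t = (let I = (\<integral>\<^sup>+ x. ennreal (exp (t * x)) \<partial>nu p) in
     if I = \<infinity> then \<infinity> else ereal (ln (enn2real I)))"

definition Lambda_star :: "real \<Rightarrow> real \<Rightarrow> ereal" where
  "Lambda_star p x = (SUP t\<in>UNIV. ereal (t * x) - Lambda p t)"

end

theory Submission
  imports Defs "HOL-Real_Asymp.Real_Asymp"
begin

(*
  Write T(x) = -ln nu_p([x,oo)). Both T and the Cramer transform are asymptotic to x^p.
  Upper bounds: the Chernoff bound e^(tx) nu_p([x,oo)) <= E e^(tX) gives tx - Lambda(t) <= T(x)
  for t >= 0, while for t < 0 the mass of (-oo,0] bounds tx - Lambda(t) by a constant; so
  Lambda*(x) <= T(x) for large x. The mass of [x, x+1] gives T(x) <= (x+1)^p + O(1).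
  Lower bound: for 0 <= c < 1 and the slope t = c p x^(p-1), the tangent line of |s|^p at x
  bounds t s by c (p-1) x^p + c |s|^p, so Lambda(t) <= c (p-1) x^p + ln E e^(c |X|^p),
  a finite constant since c < 1. Hence c x^p - O(1) <= Lambda*(x) <= T(x) for every c < 1.
*)

lemma gamma_p_pos: "0 < p \<Longrightarrow> 0 < gamma_p p"
  unfolding gamma_p_def by (intro Gamma_real_pos add_pos_pos) simp_all

lemma sets_nu [measurable_cong, simp]: "sets (nu p) = sets borel"
  unfolding nu_def by simp

lemma nn_integral_nu:
  assumes [measurable]: "f \<in> borel_measurable borel"
  shows "(\<integral>\<^sup>+x. f x \<partial>nu p) =
    (\<integral>\<^sup>+x. ennreal (exp (- (\<bar>x\<bar> powr p)) / (2 * gamma_p p)) * f x \<partial>lborel)"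
  unfolding nu_def by (subst nn_integral_density) auto

lemma nn_integral_exp_neg_abs_finite:
  fixes l :: real
  assumes "0 < l"
  shows "(\<integral>\<^sup>+s. ennreal (exp (- l * \<bar>s\<bar>)) \<partial>lborel) < \<infinity>"
proof -
  let ?f = "\<lambda>s. ennreal (exponential_density l s)"
  have total: "(\<integral>\<^sup>+s. ?f s \<partial>lborel) = 1"
  proof -
    interpret prob_space "density lborel (exponential_density l)"
      using prob_space_exponential_density[OF assms] .
    show ?thesis
      using emeasure_space_1 by (simp add: emeasure_density borel_measurable_erlang_density)
  qed
  have reflected_total: "(\<integral>\<^sup>+s. ?f (- s) \<partial>lborel) = 1"
    using total nn_integral_real_affine[where c="-1" and t=0 and f="?f"]
    by (simp add: borel_measurable_erlang_density)
  have "(\<integral>\<^sup>+s. ennreal (exp (- l * \<bar>s\<bar>)) \<partial>lborel) \<le>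
      (\<integral>\<^sup>+s. ennreal (1 / l) * (?f s + ?f (- s)) \<partial>lborel)"
  proof (intro nn_integral_mono)
    fix s :: real
    have "exp (- l * \<bar>s\<bar>) \<le> 1 / l * (exponential_density l s + exponential_density l (- s))"
      using assms by (auto simp: exponential_density_def field_simps)
    then show "ennreal (exp (- l * \<bar>s\<bar>)) \<le> ennreal (1 / l) * (?f s + ?f (- s))"
      using assms exponential_density_nonneg[OF assms]
      by (simp add: ennreal_mult[symmetric] ennreal_plus[symmetric] del: ennreal_plus)
  qed
  also have "\<dots> = ennreal (1 / l) * 2"
    by (simp add: nn_integral_cmult nn_integral_add borel_measurable_erlang_density total
        reflected_total one_add_one[symmetric] del: one_add_one)
  also have "\<dots> < \<infinity>"
    by (simp add: ennreal_mult_less_top)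
  finally show ?thesis .
qed

lemma abs_le_powr_plus_one:
  fixes p s :: real
  assumes "1 \<le> p"
  shows "\<bar>s\<bar> \<le> \<bar>s\<bar> powr p + 1"
proof (cases "1 \<le> \<bar>s\<bar>")
  case True
  then have "\<bar>s\<bar> powr 1 \<le> \<bar>s\<bar> powr p"
    using assms by (intro powr_mono) auto
  then show ?thesis by simp
qed (use powr_ge_zero[of "\<bar>s\<bar>" p] in linarith)

lemma nn_integral_exp_neg_abs_powr_finite:
  fixes p l :: real
  assumes "1 \<le> p" "0 < l"
  shows "(\<integral>\<^sup>+s. ennreal (exp (- l * \<bar>s\<bar> powr p)) \<partial>lborel) < \<infinity>"
proof -
  have "(\<integral>\<^sup>+s. ennreal (exp (- l * \<bar>s\<bar> powr p)) \<partial>lborel) \<le>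
      (\<integral>\<^sup>+s. ennreal (exp l) * ennreal (exp (- l * \<bar>s\<bar>)) \<partial>lborel)"
  proof (intro nn_integral_mono)
    fix s :: real
    have "l * \<bar>s\<bar> \<le> l * (\<bar>s\<bar> powr p + 1)"
      using abs_le_powr_plus_one[OF assms(1)] assms(2) by (intro mult_left_mono) auto
    then show "ennreal (exp (- l * \<bar>s\<bar> powr p)) \<le> ennreal (exp l) * ennreal (exp (- l * \<bar>s\<bar>))"
      by (simp add: ennreal_mult[symmetric] exp_add[symmetric] algebra_simps)
  qed
  also have "\<dots> = ennreal (exp l) * (\<integral>\<^sup>+s. ennreal (exp (- l * \<bar>s\<bar>)) \<partial>lborel)"
    by (rule nn_integral_cmult) measurable
  also have "\<dots> < \<infinity>"
    using nn_integral_exp_neg_abs_finite[OF assms(2)] by (simp add: ennreal_mult_less_top)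
  finally show ?thesis .
qed

lemma nn_integral_nu_exp_abs_powr_finite:
  assumes "1 \<le> p" "c < 1"
  shows "(\<integral>\<^sup>+s. ennreal (exp (c * \<bar>s\<bar> powr p)) \<partial>nu p) < \<infinity>"
proof -
  have "(\<integral>\<^sup>+s. ennreal (exp (c * \<bar>s\<bar> powr p)) \<partial>nu p) =
      (\<integral>\<^sup>+s. ennreal (1 / (2 * gamma_p p)) * ennreal (exp (- (1 - c) * \<bar>s\<bar> powr p)) \<partial>lborel)"
    using gamma_p_pos[of p] assms(1)
    by (subst nn_integral_nu) (auto intro!: nn_integral_cong
        simp: ennreal_mult[symmetric] exp_add[symmetric] algebra_simps)
  also have "\<dots> = ennreal (1 / (2 * gamma_p p)) *
      (\<integral>\<^sup>+s. ennreal (exp (- (1 - c) * \<bar>s\<bar> powr p)) \<partial>lborel)"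
    by (rule nn_integral_cmult) measurable
  also have "\<dots> < \<infinity>"
    using nn_integral_exp_neg_abs_powr_finite[of p "1 - c"] assms
    by (simp add: ennreal_mult_less_top)
  finally show ?thesis .
qed

lemma finite_measure_nu:
  assumes "1 \<le> p"
  shows "finite_measure (nu p)"
proof
  have "emeasure (nu p) (space (nu p)) = (\<integral>\<^sup>+s. ennreal (exp (0 * \<bar>s\<bar> powr p)) \<partial>nu p)"
    by simp
  also have "\<dots> < \<infinity>"
    using nn_integral_nu_exp_abs_powr_finite[OF assms, of 0] by simp
  finally show "emeasure (nu p) (space (nu p)) \<noteq> \<infinity>" by simp
qed

lemma measure_nu_Icc_ge:
  assumes "1 \<le> p" "a \<le> b" "\<And>s. s \<in> {a..b} \<Longrightarrow> \<bar>s\<bar> \<le> M"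
  shows "(b - a) * exp (- (M powr p)) / (2 * gamma_p p) \<le> measure (nu p) {a..b}"
proof -
  have gamma: "0 < gamma_p p"
    using assms(1) by (intro gamma_p_pos) simp
  have "ennreal ((b - a) * exp (- (M powr p)) / (2 * gamma_p p)) =
      (\<integral>\<^sup>+x. ennreal (exp (- (M powr p)) / (2 * gamma_p p)) * indicator {a..b} x \<partial>lborel)"
    using assms(2) gamma
    by (subst nn_integral_cmult_indicator) (auto simp: ennreal_mult[symmetric] mult.commute)
  also have "\<dots> \<le> (\<integral>\<^sup>+x. ennreal (exp (- (\<bar>x\<bar> powr p)) / (2 * gamma_p p)) * indicator {a..b} x \<partial>lborel)"
    using assms(1,3) gamma
    by (intro nn_integral_mono) (auto split: split_indicator intro!: ennreal_leI divide_right_mono powr_mono2)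
  also have "\<dots> = emeasure (nu p) {a..b}"
    unfolding nu_def by (subst emeasure_density) auto
  finally show ?thesis
    by (simp add: finite_measure.emeasure_eq_measure[OF finite_measure_nu[OF assms(1)]])
qed

lemma measure_nu_Ici_ge:
  assumes "1 \<le> p" "0 \<le> x"
  shows "exp (- ((x + 1) powr p)) / (2 * gamma_p p) \<le> measure (nu p) {x..}"
proof -
  have "exp (- ((x + 1) powr p)) / (2 * gamma_p p) \<le> measure (nu p) {x..x + 1}"
    using measure_nu_Icc_ge[OF assms(1), of x "x + 1" "x + 1"] assms(2) by auto
  also have "\<dots> \<le> measure (nu p) {x..}"
    by (intro finite_measure.finite_measure_mono[OF finite_measure_nu[OF assms(1)]]) auto
  finally show ?thesis .
qed

lemma measure_nu_Ici_pos:
  assumes "1 \<le> p" "0 \<le> x"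
  shows "0 < measure (nu p) {x..}"
proof -
  have "0 < exp (- ((x + 1) powr p)) / (2 * gamma_p p)"
    using assms by (simp add: gamma_p_pos)
  also have "\<dots> \<le> measure (nu p) {x..}"
    using measure_nu_Ici_ge[OF assms] .
  finally show ?thesis .
qed

lemma neg_ln_measure_nu_Ici_le:
  assumes "1 \<le> p" "0 \<le> x"
  shows "- ln (measure (nu p) {x..}) \<le> (x + 1) powr p + ln (2 * gamma_p p)"
proof -
  have "0 < gamma_p p"
    using assms(1) by (intro gamma_p_pos) simp
  moreover have "ln (exp (- ((x + 1) powr p)) / (2 * gamma_p p)) \<le> ln (measure (nu p) {x..})"
    using measure_nu_Ici_ge[OF assms] measure_nu_Ici_pos[OF assms] \<open>0 < gamma_p p\<close>
    by (subst ln_le_cancel_iff) auto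
  ultimately show ?thesis by (simp add: ln_div)
qed

lemma measure_nu_Iic_pos:
  assumes "1 \<le> p"
  shows "0 < measure (nu p) {..0}"
proof -
  have "0 < exp (- (1 powr p)) / (2 * gamma_p p)"
    using assms by (simp add: gamma_p_pos)
  also have "\<dots> \<le> measure (nu p) {-1..0}"
    using measure_nu_Icc_ge[OF assms, of "-1" 0 1] by auto
  also have "\<dots> \<le> measure (nu p) {..0}"
    by (intro finite_measure.finite_measure_mono[OF finite_measure_nu[OF assms]]) auto
  finally show ?thesis .
qed

definition nu_mgf :: "real \<Rightarrow> real \<Rightarrow> ennreal" where
  "nu_mgf p t = (\<integral>\<^sup>+x. ennreal (exp (t * x)) \<partial>nu p)"

lemma Lambda_nu_mgf:
  "Lambda p t = (if nu_mgf p t = \<infinity> then \<infinity> else ereal (ln (enn2real (nu_mgf p t))))"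
  unfolding Lambda_def nu_mgf_def Let_def by simp

lemma ln_le_Lambda:
  assumes "ennreal m \<le> nu_mgf p t" "0 < m"
  shows "ereal (ln m) \<le> Lambda p t"
proof (cases "nu_mgf p t = \<infinity>")
  case False
  then have "enn2real (ennreal m) \<le> enn2real (nu_mgf p t)"
    using assms(1) by (intro enn2real_mono) (simp_all add: less_top)
  then show ?thesis
    using False assms(2) by (simp add: Lambda_nu_mgf)
qed (simp add: Lambda_nu_mgf)

lemma Lambda_le_ln:
  assumes "nu_mgf p t \<le> ennreal u" "0 < nu_mgf p t"
  shows "Lambda p t \<le> ereal (ln u)"
proof -
  have finite: "nu_mgf p t < \<infinity>"
    using assms(1) by (rule le_less_trans) simp
  have "0 < ennreal u"
    using assms(2,1) by (rule order.strict_trans2)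
  then have "0 < u" by simp
  have "0 < enn2real (nu_mgf p t)"
    using assms(2) finite by (simp add: enn2real_positive_iff)
  moreover have "enn2real (nu_mgf p t) \<le> enn2real (ennreal u)"
    using assms(1) by (intro enn2real_mono) simp_all
  ultimately show ?thesis
    using finite \<open>0 < u\<close> by (simp add: Lambda_nu_mgf)
qed

lemma exp_mult_emeasure_le_nu_mgf:
  assumes "S \<in> sets borel" "\<And>s. s \<in> S \<Longrightarrow> t * a \<le> t * s"
  shows "ennreal (exp (t * a)) * emeasure (nu p) S \<le> nu_mgf p t"
proof -
  have "ennreal (exp (t * a)) * emeasure (nu p) S =
      (\<integral>\<^sup>+x. ennreal (exp (t * a)) * indicator S x \<partial>nu p)"
    using assms(1) by (simp add: nn_integral_cmult_indicator)
  also have "\<dots> \<le> nu_mgf p t"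
    unfolding nu_mgf_def using assms(2) by (intro nn_integral_mono) (auto split: split_indicator)
  finally show ?thesis .
qed

lemma powr_tangent_le_abs_powr:
  fixes p x s :: real
  assumes "1 \<le> p" "0 < x"
  shows "x powr p + p * x powr (p - 1) * (s - x) \<le> \<bar>s\<bar> powr p"
proof (cases "0 < s")
  case True
  have "((\<lambda>z. z powr p) has_real_derivative p * x powr (p - 1)) (at x within {0<..})"
    using assms by (intro has_field_derivative_at_within[OF has_real_derivative_powr]) auto
  then have "p * x powr (p - 1) * (s - x) \<le> s powr p - x powr p"
    using assms True
    by (intro convex_on_imp_above_tangent[OF powr_convex[OF assms(1)]]) (auto simp: interior_open)
  then show ?thesis
    using True by simp
next
  case False
  have "x powr (p - 1) * x = x powr p"
    using assms(2) by (simp add: powr_diff)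
  then have "x powr p + p * x powr (p - 1) * (s - x) = p * x powr (p - 1) * s - (p - 1) * x powr p"
    by (simp add: algebra_simps)
  moreover have "p * x powr (p - 1) * s \<le> 0"
    using assms False by (intro mult_nonneg_nonpos) auto
  moreover have "0 \<le> (p - 1) * x powr p"
    using assms by simp
  ultimately show ?thesis
    using powr_ge_zero[of "\<bar>s\<bar>" p] by linarith
qed

lemma nu_mgf_tangent_slope_le:
  assumes "1 \<le> p" "0 < x" "0 \<le> c"
  shows "nu_mgf p (c * p * x powr (p - 1)) \<le>
    ennreal (exp (c * (p - 1) * x powr p)) * (\<integral>\<^sup>+s. ennreal (exp (c * \<bar>s\<bar> powr p)) \<partial>nu p)"
proof -
  have "nu_mgf p (c * p * x powr (p - 1)) \<le>
      (\<integral>\<^sup>+s. ennreal (exp (c * (p - 1) * x powr p)) * ennreal (exp (c * \<bar>s\<bar> powr p)) \<partial>nu p)"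
    unfolding nu_mgf_def
  proof (intro nn_integral_mono)
    fix s :: real
    have "c * (x powr p + p * x powr (p - 1) * (s - x)) \<le> c * \<bar>s\<bar> powr p"
      using powr_tangent_le_abs_powr[OF assms(1,2)] assms(3) by (rule mult_left_mono)
    moreover have "x powr (p - 1) * x = x powr p"
      using assms(2) by (simp add: powr_diff)
    ultimately have "c * p * x powr (p - 1) * s \<le> c * (p - 1) * x powr p + c * \<bar>s\<bar> powr p"
      by (simp add: algebra_simps)
    then show "ennreal (exp (c * p * x powr (p - 1) * s)) \<le>
        ennreal (exp (c * (p - 1) * x powr p)) * ennreal (exp (c * \<bar>s\<bar> powr p))"
      by (simp add: ennreal_mult[symmetric] exp_add[symmetric])
  qed
  also have "\<dots> = ennreal (exp (c * (p - 1) * x powr p)) * (\<integral>\<^sup>+s. ennreal (exp (c * \<bar>s\<bar> powr p)) \<partial>nu p)"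
    by (rule nn_integral_cmult) measurable
  finally show ?thesis .
qed

lemma Lambda_star_ge: "ereal (t * x) - Lambda p t \<le> Lambda_star p x"
  unfolding Lambda_star_def by (rule SUP_upper) simp

lemma Lambda_star_leI: "(\<And>t. ereal (t * x) - Lambda p t \<le> B) \<Longrightarrow> Lambda_star p x \<le> B"
  unfolding Lambda_star_def by (rule SUP_least)

lemma Lambda_star_le_max:
  assumes "1 \<le> p" "0 \<le> x"
  shows "Lambda_star p x \<le>
    ereal (max (- ln (measure (nu p) {x..})) (- ln (measure (nu p) {..0})))"
proof (rule Lambda_star_leI)
  interpret finite_measure "nu p"
    using finite_measure_nu[OF assms(1)] .
  fix t :: real
  show "ereal (t * x) - Lambda p t \<le>
      ereal (max (- ln (measure (nu p) {x..})) (- ln (measure (nu p) {..0})))"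
  proof (cases "0 \<le> t")
    case True
    have "ennreal (exp (t * x)) * emeasure (nu p) {x..} \<le> nu_mgf p t"
      using True by (intro exp_mult_emeasure_le_nu_mgf) (auto intro: mult_left_mono)
    then have "ereal (ln (exp (t * x) * measure (nu p) {x..})) \<le> Lambda p t"
      using measure_nu_Ici_pos[OF assms]
      by (intro ln_le_Lambda) (simp_all add: emeasure_eq_measure ennreal_mult)
    then have "ereal (t * x) - Lambda p t \<le> ereal (- ln (measure (nu p) {x..}))"
      using measure_nu_Ici_pos[OF assms] by (cases "Lambda p t") (auto simp: ln_mult)
    then show ?thesis
      by (rule order.trans) simp
  next
    case False
    have "ennreal (exp (t * 0)) * emeasure (nu p) {..0} \<le> nu_mgf p t"
      using False by (intro exp_mult_emeasure_le_nu_mgf) (auto intro: mult_nonpos_nonpos)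
    then have "ereal (ln (measure (nu p) {..0})) \<le> Lambda p t"
      using measure_nu_Iic_pos[OF assms(1)]
      by (intro ln_le_Lambda) (simp_all add: emeasure_eq_measure)
    moreover have "t * x \<le> 0"
      using False assms(2) by (simp add: mult_nonpos_nonneg)
    ultimately have "ereal (t * x) - Lambda p t \<le> ereal (- ln (measure (nu p) {..0}))"
      by (cases "Lambda p t") auto
    then show ?thesis
      by (rule order.trans) simp
  qed
qed

lemma Lambda_star_ge_powr:
  assumes "1 \<le> p" "0 < x" "0 \<le> c" "c < 1"
  shows "ereal (c * x powr p - ln (enn2real (\<integral>\<^sup>+s. ennreal (exp (c * \<bar>s\<bar> powr p)) \<partial>nu p)))
    \<le> Lambda_star p x"
proof -
  interpret finite_measure "nu p"
    using finite_measure_nu[OF assms(1)] .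
  define t where "t = c * p * x powr (p - 1)"
  define K where "K = enn2real (\<integral>\<^sup>+s. ennreal (exp (c * \<bar>s\<bar> powr p)) \<partial>nu p)"
  have K: "(\<integral>\<^sup>+s. ennreal (exp (c * \<bar>s\<bar> powr p)) \<partial>nu p) = ennreal K"
    unfolding K_def using nn_integral_nu_exp_abs_powr_finite[OF assms(1,4)]
    by (simp add: ennreal_enn2real_if)
  have "t * x = c * p * x powr p"
    using assms(2) by (simp add: t_def powr_diff)
  have "ennreal (exp (t * x)) * emeasure (nu p) {x..} \<le> nu_mgf p t"
    using assms by (intro exp_mult_emeasure_le_nu_mgf) (auto simp: t_def intro: mult_left_mono)
  moreover have "0 < ennreal (exp (t * x)) * emeasure (nu p) {x..}"
    using measure_nu_Ici_pos[of p x] assms by (simp add: emeasure_eq_measure ennreal_zero_less_mult_iff)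
  ultimately have "0 < nu_mgf p t"
    by (rule order.strict_trans2[rotated])
  moreover have "nu_mgf p t \<le> ennreal (exp (c * (p - 1) * x powr p) * K)"
    using nu_mgf_tangent_slope_le[OF assms(1-3)] unfolding t_def K by (simp add: K_def ennreal_mult)
  ultimately have "Lambda p t \<le> ereal (ln (exp (c * (p - 1) * x powr p) * K))"
    by (intro Lambda_le_ln)
  moreover have "0 < K"
  proof -
    have "0 < ennreal (exp (c * (p - 1) * x powr p) * K)"
      using \<open>0 < nu_mgf p t\<close> \<open>nu_mgf p t \<le> _\<close> by (rule order.strict_trans2)
    then show ?thesis
      by (simp add: zero_less_mult_iff)
  qed
  ultimately have "ereal (c * x powr p - ln K) \<le> ereal (t * x) - Lambda p t"
    using \<open>t * x = c * p * x powr p\<close>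
    by (cases "Lambda p t") (auto simp: ln_mult algebra_simps)
  then show ?thesis
    unfolding K_def using Lambda_star_ge by (rule order.trans)
qed

lemma eventually_powr_le_Lambda_star:
  assumes "1 \<le> p" "q < 1"
  shows "\<forall>\<^sub>F x in at_top. ereal (q * x powr p) \<le> Lambda_star p x"
proof -
  define c where "c = (1 + max q 0) / 2"
  define C where "C = ln (enn2real (\<integral>\<^sup>+s. ennreal (exp (c * \<bar>s\<bar> powr p)) \<partial>nu p))"
  have c: "0 \<le> c" "c < 1" "max q 0 < c"
    using assms(2) by (auto simp: c_def)
  have "\<forall>\<^sub>F x in at_top. max q 0 * x powr p \<le> c * x powr p - C"
    using assms(1) c(3) by real_asymp
  with eventually_gt_at_top[of 0] show ?thesis
  proof eventually_elim
    case (elim x)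
    have "q * x powr p \<le> max q 0 * x powr p"
      by (intro mult_right_mono) auto
    also have "\<dots> \<le> c * x powr p - C"
      using elim(2) .
    finally have "ereal (q * x powr p) \<le> ereal (c * x powr p - C)"
      by simp
    then show ?case
      using Lambda_star_ge_powr[OF assms(1) elim(1) c(1,2)] unfolding C_def
      by (rule order.trans)
  qed
qed

lemma eventually_Lambda_star_le_neg_ln_tail:
  assumes "1 \<le> p"
  shows "\<forall>\<^sub>F x in at_top. Lambda_star p x \<le> ereal (- ln (measure (nu p) {x..}))"
proof -
  define A where "A = - ln (measure (nu p) {..0})"
  have "\<forall>\<^sub>F x in at_top. A < 1 / 2 * x powr p"
    using assms by real_asymp
  moreover have "\<forall>\<^sub>F x in at_top. ereal (1 / 2 * x powr p) \<le> Lambda_star p x"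
    using assms by (intro eventually_powr_le_Lambda_star) auto
  ultimately show ?thesis
    using eventually_ge_at_top[of 0]
  proof eventually_elim
    case (elim x)
    then have "ereal A < Lambda_star p x"
      using less_le_trans[of "ereal A" "ereal (1 / 2 * x powr p)"] by simp
    then show ?case
      using Lambda_star_le_max[OF assms elim(3)] unfolding A_def
      by (auto simp: max_def split: if_splits)
  qed
qed

lemma asymp_equiv_sandwich_scaled:
  fixes f g h :: "'a \<Rightarrow> real"
  assumes "g \<sim>[F] h" "\<forall>\<^sub>F x in F. 0 < h x" "\<forall>\<^sub>F x in F. f x \<le> g x"
    and "\<And>q. q < 1 \<Longrightarrow> \<forall>\<^sub>F x in F. q * h x \<le> f x"
  shows "f \<sim>[F] h"
proof (rule asymp_equivI', rule order_tendstoI)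
  fix a :: real
  assume "a < 1"
  then have "(a + 1) / 2 < 1" "a < (a + 1) / 2"
    by simp_all
  from assms(4)[OF this(1)] assms(2) show "\<forall>\<^sub>F x in F. a < f x / h x"
  proof eventually_elim
    case (elim x)
    have "a * h x < (a + 1) / 2 * h x"
      using \<open>a < (a + 1) / 2\<close> elim(2) by (rule mult_strict_right_mono)
    then have "a * h x < f x"
      using elim(1) by linarith
    then show ?case
      using elim(2) by (simp add: pos_less_divide_eq)
  qed
next
  fix b :: real
  assume "1 < b"
  have "((\<lambda>x. g x / h x) \<longlongrightarrow> 1) F"
    using assms(1,2) by (intro asymp_equivD_strong) (auto elim: eventually_mono)
  from order_tendstoD(2)[OF this \<open>1 < b\<close>] assms(2,3)
  show "\<forall>\<^sub>F x in F. f x / h x < b"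
  proof eventually_elim
    case (elim x)
    then show ?case
      using divide_right_mono[of "f x" "g x" "h x"] by simp
  qed
qed

lemma eventually_real_of_Lambda_star_bounds:
  assumes "1 \<le> p" "q < 1"
  shows "\<forall>\<^sub>F x in at_top. Lambda_star p x = ereal (real_of_ereal (Lambda_star p x)) \<and>
    q * x powr p \<le> real_of_ereal (Lambda_star p x) \<and>
    real_of_ereal (Lambda_star p x) \<le> - ln (measure (nu p) {x..})"
  using eventually_powr_le_Lambda_star[OF assms] eventually_Lambda_star_le_neg_ln_tail[OF assms(1)]
proof eventually_elim
  case (elim x)
  then obtain r where "Lambda_star p x = ereal r"
    by (cases "Lambda_star p x") auto
  with elim show ?case
    by simp
qed

lemma asymp_equiv_real_of_Lambda_star:
  assumes "1 \<le> p"
  shows "(\<lambda>x. real_of_ereal (Lambda_star p x)) \<sim>[at_top] (\<lambda>x. x powr p)"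
proof (rule asymp_equiv_sandwich_scaled)
  show "(\<lambda>x. (x + 1) powr p + ln (2 * gamma_p p)) \<sim>[at_top] (\<lambda>x. x powr p)"
    using assms by real_asymp
  show "\<forall>\<^sub>F x in at_top. 0 < x powr p"
    by real_asymp
  show "\<forall>\<^sub>F x in at_top. real_of_ereal (Lambda_star p x) \<le> (x + 1) powr p + ln (2 * gamma_p p)"
    using eventually_real_of_Lambda_star_bounds[OF assms zero_less_one] eventually_ge_at_top[of 0]
    by eventually_elim (use neg_ln_measure_nu_Ici_le[OF assms] in fastforce)
  show "\<forall>\<^sub>F x in at_top. q * x powr p \<le> real_of_ereal (Lambda_star p x)" if "q < 1" for q
    using eventually_real_of_Lambda_star_bounds[OF assms that] by eventually_elim simp
qed

lemma asymp_equiv_neg_ln_measure_nu_Ici: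
  assumes "1 \<le> p"
  shows "(\<lambda>x. - ln (measure (nu p) {x..})) \<sim>[at_top] (\<lambda>x. x powr p)"
proof (rule asymp_equiv_sandwich_scaled)
  show "(\<lambda>x. (x + 1) powr p + ln (2 * gamma_p p)) \<sim>[at_top] (\<lambda>x. x powr p)"
    using assms by real_asymp
  show "\<forall>\<^sub>F x in at_top. 0 < x powr p"
    by real_asymp
  show "\<forall>\<^sub>F x in at_top. - ln (measure (nu p) {x..}) \<le> (x + 1) powr p + ln (2 * gamma_p p)"
    using eventually_ge_at_top[of 0] by eventually_elim (rule neg_ln_measure_nu_Ici_le[OF assms])
  show "\<forall>\<^sub>F x in at_top. q * x powr p \<le> - ln (measure (nu p) {x..})" if "q < 1" for q
    using eventually_real_of_Lambda_star_bounds[OF assms that] by eventually_elim linarith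
qed

theorem theorem1p2:
  fixes p :: real
  assumes "p \<ge> 1"
  shows "((\<lambda>x. ereal (- ln (measure (nu p) {x..})) / Lambda_star p x) \<longlongrightarrow> 1) at_top"
proof -
  define T where "T x = - ln (measure (nu p) {x..})" for x
  define l where "l x = real_of_ereal (Lambda_star p x)" for x
  have "T \<sim>[at_top] l"
    unfolding T_def l_def using asymp_equiv_neg_ln_measure_nu_Ici[OF assms]
      asymp_equiv_symI[OF asymp_equiv_real_of_Lambda_star[OF assms]]
    by (rule asymp_equiv_trans)
  moreover have finite_pos: "\<forall>\<^sub>F x in at_top. Lambda_star p x = ereal (l x) \<and> 0 < l x"
    using eventually_real_of_Lambda_star_bounds[OF assms, of "1 / 2", simplified] eventually_gt_at_top[of 0]
  proof eventually_elim
    case (elim x)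
    have "0 < x powr p / 2"
      using elim(2) by simp
    also have "\<dots> \<le> l x"
      using elim(1) by (simp add: l_def)
    finally show ?case
      using elim(1) by (simp add: l_def)
  qed
  ultimately have "((\<lambda>x. T x / l x) \<longlongrightarrow> 1) at_top"
    by (intro asymp_equivD_strong) (auto elim: eventually_mono)
  then have "((\<lambda>x. ereal (T x / l x)) \<longlongrightarrow> 1) at_top"
    by (simp add: one_ereal_def tendsto_ereal)
  moreover have "\<forall>\<^sub>F x in at_top. ereal (T x / l x) = ereal (T x) / Lambda_star p x"
    using finite_pos by eventually_elim auto
  ultimately show ?thesis
    unfolding T_def by (rule Lim_transform_eventually)
qed

end
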